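(* In the setting described in the context, for any $s\in\{1,\dots,T\}$, any $k\in\{1,\dots,K\}$ and any $0<\beta<1$, $$\mathbb{P}\left(\frac{(v^*_{ks})^2}{\sum_{t\neq s}(v^*_{kt})^2}\ge\frac{1}{T^\beta}\right)\le\frac{T^\beta+1}{T}.$$
   Context: Fixed inputs $\mathbf{x}_1,\dots,\mathbf{x}_N\in\mathbb{R}^d$. Networks $f_\theta(\mathbf{x})=\sum_{k=1}^K\mathbf{v}_k(\mathbf{w}_k^\top\mathbf{x}+b_k)_+$ with $\mathbf{w}_k\in\mathbb{S}^{d-1}$, $b_k\in\mathbb{R}$, $\mathbf{v}_k\in\mathbb{R}^T$, $K\ge N^2$. Training problem: $\min_\theta\sum_{i=1}^N\mathcal{L}(\mathbf{y}_i,f_\theta(\mathbf{x}_i))+\lambda\sum_{k=1}^K\|\mathbf{v}_k\|_2$, $\lambda>0$, with loss separable across tasks and lower semicontinuous in its second argument. The task label vectors $\mathbf{y}_{\cdot,t}$, $t=1,\dots,T$, are exchangeable random vectors, and the optimal output weights $\mathbf{v}_k^*=(v^*_{k1},\dots,v^*_{kT})$ are given by a measurable deterministic permutation-invariant selection map of the labels (permuting the $T$ label coordinates permutes the coordinates of all selected $\mathbf{v}_k^*$ identically). The ratio is $[0,\infty]$-valued: $\infty$ iff the denominator is $0$ and the numerator nonzero, and $0$ if both are $0$. *)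

theory Defs
  imports "HOL-Analysis.Analysis" "HOL-Probability.Probability"
begin

definition lsc_fun :: "(real \<Rightarrow> ereal) \<Rightarrow> bool" where
  "lsc_fun g \<longleftrightarrow> (\<forall>x. \<forall>c. c < g x \<longrightarrow> (\<forall>\<^sub>F z in at x. c < g z))"

definition relu_net ::
  "real^'d^'k \<Rightarrow> real^'k \<Rightarrow> real^'T^'k \<Rightarrow> real^'d \<Rightarrow> real^'T" where
  "relu_net W B V x = (\<Sum>k\<in>UNIV. max 0 (W $ k \<bullet> x + B $ k) *\<^sub>R V $ k)"

(* training objective; the loss L(y, yhat) = sum_t l(y_t, yhat_t) is separable across tasks *)
definition train_obj ::
  "('n \<Rightarrow> real^'d) \<Rightarrow> (real \<Rightarrow> real \<Rightarrow> ereal) \<Rightarrow> real \<Rightarrow> real^'T^'n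
     \<Rightarrow> real^'d^'k \<Rightarrow> real^'k \<Rightarrow> real^'T^'k \<Rightarrow> ereal" where
  "train_obj x l lam Y W B V =
     (\<Sum>i\<in>UNIV. \<Sum>t\<in>UNIV. l (Y $ i $ t) (relu_net W B V (x i) $ t))
     + ereal (lam * (\<Sum>k\<in>UNIV. norm (V $ k)))"

definition ratio :: "real \<Rightarrow> real \<Rightarrow> ereal" where
  "ratio a b = (if b = 0 then (if a = 0 then 0 else \<infinity>) else ereal (a / b))"

end

theory Submission
  imports Defs
begin

text \<open>
  Call a coordinate \<open>t\<close> of a nonnegative vector \<open>a\<close> heavy for the constant \<open>c\<close> if
  \<open>a t > 0\<close> and \<open>a t\<close> is at least a \<open>1/c\<close> fraction of the total mass; at most \<open>c\<close>
  coordinates can be heavy. For \<open>a t = (v\<^sup>*\<^sub>k\<^sub>t)\<^sup>2\<close> and \<open>c = T\<^sup>\<beta> + 1\<close> the event of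
  the theorem says that \<open>s\<close> is heavy. By exchangeability of the labels and permutation
  equivariance of the selection map every coordinate is heavy with the same probability, and
  \<open>T\<close> times this probability is the expected number of heavy coordinates, hence at most \<open>c\<close>.
\<close>

definition heavy_coords :: "real \<Rightarrow> real^'T::finite \<Rightarrow> 'T set" where
  "heavy_coords c a = {t. 0 < a $ t \<and> (\<Sum>u\<in>UNIV. a $ u) \<le> c * a $ t}"

lemma card_heavy_coords_le:
  fixes a :: "real^'T::finite"
  assumes nonneg: "\<And>t. 0 \<le> a $ t" and "0 < c"
  shows "real (card (heavy_coords c a)) \<le> c"
proof (cases "heavy_coords c a = {}")
  case True
  then show ?thesis using \<open>0 < c\<close> by simp
next
  case False
  let ?S = "\<Sum>u\<in>UNIV. a $ u"
  obtain t0 where "t0 \<in> heavy_coords c a" using False by blast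
  moreover have "a $ t0 \<le> ?S" using nonneg by (intro member_le_sum) auto
  ultimately have "0 < ?S" by (auto simp: heavy_coords_def)
  have "real (card (heavy_coords c a)) * (?S / c) = (\<Sum>t\<in>heavy_coords c a. ?S / c)"
    by simp
  also have "\<dots> \<le> (\<Sum>t\<in>heavy_coords c a. a $ t)"
    using \<open>0 < c\<close> by (intro sum_mono) (auto simp: heavy_coords_def field_simps)
  also have "\<dots> \<le> ?S"
    using nonneg by (intro sum_mono2) auto
  finally show ?thesis
    using \<open>0 < ?S\<close> \<open>0 < c\<close> by (simp add: field_simps)
qed

lemma heavy_coords_permute:
  fixes a :: "real^'T::finite"
  assumes "\<sigma> permutes UNIV"
  shows "t \<in> heavy_coords c (\<chi> u. a $ \<sigma> u) \<longleftrightarrow> \<sigma> t \<in> heavy_coords c a"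
proof -
  have "(\<Sum>u\<in>UNIV. a $ \<sigma> u) = (\<Sum>u\<in>UNIV. a $ u)"
    using sum.permute[OF assms, of "\<lambda>u. a $ u"] by (simp add: o_def)
  then show ?thesis by (simp add: heavy_coords_def)
qed

lemma pred_heavy_coords [measurable (raw)]:
  fixes f :: "'b \<Rightarrow> real^'T::finite"
  assumes "f \<in> borel_measurable M"
  shows "Measurable.pred M (\<lambda>x. t \<in> heavy_coords c (f x))"
proof -
  have "Measurable.pred borel (\<lambda>v :: real^'T. t \<in> heavy_coords c v)"
    unfolding heavy_coords_def by measurable
  from measurable_compose[OF assms this] show ?thesis .
qed

lemma mem_heavy_coords_iff_ratio:
  fixes a :: "real^'T::finite"
  assumes nonneg: "\<And>t. 0 \<le> a $ t" and "0 < p"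
  shows "s \<in> heavy_coords (p + 1) a \<longleftrightarrow>
    ereal (1 / p) \<le> ratio (a $ s) (\<Sum>t\<in>UNIV - {s}. a $ t)"
proof -
  define D where "D = (\<Sum>t\<in>UNIV - {s}. a $ t)"
  have "0 \<le> D" unfolding D_def using nonneg by (simp add: sum_nonneg)
  have "(\<Sum>u\<in>UNIV. a $ u) = a $ s + D"
    unfolding D_def by (simp add: sum.remove[of UNIV s])
  then have heavy: "s \<in> heavy_coords (p + 1) a \<longleftrightarrow> 0 < a $ s \<and> D \<le> p * a $ s"
    by (simp add: heavy_coords_def algebra_simps)
  show ?thesis
  proof (cases "D = 0")
    case True
    then show ?thesis using heavy nonneg[of s] \<open>0 < p\<close> by (auto simp: ratio_def D_def)
  next
    case False
    with \<open>0 \<le> D\<close> have "0 < D" by simp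
    have "ereal (1 / p) \<le> ratio (a $ s) D \<longleftrightarrow> D \<le> p * a $ s"
      using False \<open>0 < D\<close> \<open>0 < p\<close> by (simp add: ratio_def field_simps)
    moreover have "D \<le> p * a $ s \<Longrightarrow> 0 < a $ s"
      using \<open>0 < D\<close> \<open>0 < p\<close> nonneg[of s] by (cases "a $ s = 0") auto
    ultimately show ?thesis using heavy D_def by blast
  qed
qed

lemma measure_preimage_eq_if_distr_eq:
  assumes "X \<in> borel_measurable M" "X' \<in> borel_measurable M"
    and "distr M borel X' = distr M borel X" and "B \<in> sets borel"
  shows "measure M (X' -` B \<inter> space M) = measure M (X -` B \<inter> space M)"
  using assms by (metis measure_distr)

lemma measure_heavy_coord_exchangeable:
  fixes Y :: "'w \<Rightarrow> real^'T::finite^'n::finite" and f :: "real^'T^'n \<Rightarrow> real^'T"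
  assumes Y_meas: "Y \<in> borel_measurable M"
    and exch: "\<And>\<sigma>. \<sigma> permutes (UNIV :: 'T set) \<Longrightarrow>
        distr M borel (\<lambda>\<omega>. \<chi> i t. Y \<omega> $ i $ \<sigma> t) = distr M borel Y"
    and f_meas: "f \<in> borel_measurable borel"
    and f_equiv: "\<And>\<sigma> Z. \<sigma> permutes (UNIV :: 'T set) \<Longrightarrow>
        f (\<chi> i t. Z $ i $ \<sigma> t) = (\<chi> t. f Z $ \<sigma> t)"
  shows "measure M {\<omega> \<in> space M. t \<in> heavy_coords c (f (Y \<omega>))}
       = measure M {\<omega> \<in> space M. s \<in> heavy_coords c (f (Y \<omega>))}"
proof -
  define \<sigma> where "\<sigma> = Transposition.transpose s t"
  have \<sigma>: "\<sigma> permutes UNIV" unfolding \<sigma>_def by (rule permutes_swap_id) auto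
  define H where "H = {Z. s \<in> heavy_coords c (f Z)}"
  have H_sets: "H \<in> sets borel"
    unfolding H_def using f_meas by measurable
  have "(\<lambda>Z :: real^'T^'n. \<chi> i u. Z $ i $ \<sigma> u) \<in> borel_measurable borel"
    by (intro borel_measurable_continuous_onI continuous_on_vec_lambda continuous_on_component
        continuous_on_id)
  from measurable_compose[OF Y_meas this]
  have swap_meas: "(\<lambda>\<omega>. \<chi> i u. Y \<omega> $ i $ \<sigma> u) \<in> borel_measurable M" .
  have "\<sigma> s = t" by (simp add: \<sigma>_def)
  then have "(\<lambda>\<omega>. \<chi> i u. Y \<omega> $ i $ \<sigma> u) -` H \<inter> space M
      = {\<omega> \<in> space M. t \<in> heavy_coords c (f (Y \<omega>))}"
    by (auto simp: H_def f_equiv[OF \<sigma>] heavy_coords_permute[OF \<sigma>])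
  moreover have "Y -` H \<inter> space M = {\<omega> \<in> space M. s \<in> heavy_coords c (f (Y \<omega>))}"
    by (auto simp: H_def)
  ultimately show ?thesis
    using measure_preimage_eq_if_distr_eq[OF Y_meas swap_meas exch[OF \<sigma>] H_sets] by simp
qed

lemma (in prob_space) sum_prob_le_if_count_le:
  assumes "finite I" and events: "\<And>t. t \<in> I \<Longrightarrow> A t \<in> events"
    and count: "\<And>\<omega>. \<omega> \<in> space M \<Longrightarrow> real (card {t \<in> I. \<omega> \<in> A t}) \<le> c"
  shows "(\<Sum>t\<in>I. prob (A t)) \<le> c"
proof -
  have "(\<Sum>t\<in>I. prob (A t)) = (\<Sum>t\<in>I. expectation (indicator (A t)))"
    using events by (intro sum.cong) simp_all
  also have "\<dots> = expectation (\<lambda>\<omega>. \<Sum>t\<in>I. indicator (A t) \<omega>)"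
    by (rule Bochner_Integration.integral_sum[symmetric])
      (simp add: events emeasure_finite less_top[symmetric])
  also have "\<dots> \<le> expectation (\<lambda>\<omega>. c)"
  proof (rule integral_mono)
    show "integrable M (\<lambda>\<omega>. \<Sum>t\<in>I. indicator (A t) \<omega> :: real)"
      by (intro Bochner_Integration.integrable_sum)
        (simp add: events emeasure_finite less_top[symmetric])
    show "(\<Sum>t\<in>I. indicator (A t) \<omega>) \<le> c" if "\<omega> \<in> space M" for \<omega>
      using count[OF that] \<open>finite I\<close> by (simp add: indicator_def sum.If_cases Int_def)
  qed simp
  also have "\<dots> = c" by (simp add: prob_space)
  finally show ?thesis .
qed

lemma (in prob_space) prob_heavy_coord_le:
  fixes Y :: "'a \<Rightarrow> real^'T::finite^'n::finite" and f :: "real^'T^'n \<Rightarrow> real^'T"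
  assumes Y_meas: "Y \<in> borel_measurable M"
    and exch: "\<And>\<sigma>. \<sigma> permutes (UNIV :: 'T set) \<Longrightarrow>
        distr M borel (\<lambda>\<omega>. \<chi> i t. Y \<omega> $ i $ \<sigma> t) = distr M borel Y"
    and f_meas: "f \<in> borel_measurable borel"
    and f_equiv: "\<And>\<sigma> Z. \<sigma> permutes (UNIV :: 'T set) \<Longrightarrow>
        f (\<chi> i t. Z $ i $ \<sigma> t) = (\<chi> t. f Z $ \<sigma> t)"
    and nonneg: "\<And>Z t. 0 \<le> f Z $ t" and "0 < c"
  shows "prob {\<omega> \<in> space M. s \<in> heavy_coords c (f (Y \<omega>))} \<le> c / CARD('T)"
proof -
  let ?E = "\<lambda>t. {\<omega> \<in> space M. t \<in> heavy_coords c (f (Y \<omega>))}"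
  have "(\<Sum>t\<in>UNIV. prob (?E t)) \<le> c"
  proof (rule sum_prob_le_if_count_le)
    show "?E t \<in> events" for t
      using Y_meas f_meas by measurable
    show "real (card {t \<in> UNIV. \<omega> \<in> ?E t}) \<le> c" if "\<omega> \<in> space M" for \<omega>
      using that card_heavy_coords_le[OF nonneg \<open>0 < c\<close>] by simp
  qed simp
  moreover have "(\<Sum>t\<in>UNIV. prob (?E t)) = (\<Sum>t\<in>(UNIV :: 'T set). prob (?E s))"
    by (intro sum.cong refl measure_heavy_coord_exchangeable[OF Y_meas exch f_meas f_equiv])
  ultimately show ?thesis
    by (simp add: field_simps)
qed

theorem lemma4:
  fixes M :: "'w measure"
    and x :: "'n::finite \<Rightarrow> real^'d::finite"
    and l :: "real \<Rightarrow> real \<Rightarrow> ereal"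
    and lam :: real
    and Y :: "'w \<Rightarrow> real^'T::finite^'n"
    and sel :: "real^'T^'n \<Rightarrow> (real^'d^'k::finite) \<times> (real^'k) \<times> (real^'T^'k)"
    and s :: 'T and k :: 'k and \<beta> :: real
  assumes "prob_space M"
    and K_ge: "CARD('k) \<ge> CARD('n)^2"
    and lam_pos: "lam > 0"
    and l_lsc: "\<And>y. lsc_fun (l y)"
    and Y_meas: "Y \<in> borel_measurable M"
    and exch: "\<And>\<sigma>. \<sigma> permutes (UNIV :: 'T set) \<Longrightarrow>
        distr M borel (\<lambda>\<omega>. \<chi> i t. Y \<omega> $ i $ \<sigma> t) = distr M borel Y"
    and sel_meas: "(\<lambda>Z. snd (snd (sel Z))) \<in> borel_measurable borel"
    and sel_equiv: "\<And>\<sigma> Z. \<sigma> permutes (UNIV :: 'T set) \<Longrightarrow>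
        snd (snd (sel (\<chi> i t. Z $ i $ \<sigma> t))) = (\<chi> j t. snd (snd (sel Z)) $ j $ \<sigma> t)"
    and sel_sphere: "\<And>Z j. norm (fst (sel Z) $ j) = 1"
    and sel_opt: "\<And>Z (W :: real^'d^'k) (B :: real^'k) (V :: real^'T^'k). (\<forall>j. norm (W $ j) = 1) \<Longrightarrow>
        train_obj x l lam Z (fst (sel Z)) (fst (snd (sel Z))) (snd (snd (sel Z)))
          \<le> train_obj x l lam Z W B V"
    and "0 < \<beta>" and "\<beta> < 1"
  shows "measure M {\<omega> \<in> space M.
           ratio ((snd (snd (sel (Y \<omega>))) $ k $ s)^2)
                 (\<Sum>t\<in>UNIV - {s}. (snd (snd (sel (Y \<omega>))) $ k $ t)^2)
             \<ge> ereal (1 / real CARD('T) powr \<beta>)}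
         \<le> (real CARD('T) powr \<beta> + 1) / real CARD('T)"
proof -
  interpret prob_space M by fact
  define T where "T = real CARD('T)"
  define f where "f = (\<lambda>Z :: real^'T^'n. \<chi> u. (snd (snd (sel Z)) $ k $ u)\<^sup>2)"
  have "0 < T" by (simp add: T_def)
  have c_pos: "0 < T powr \<beta> + 1" using powr_ge_zero[of T \<beta>] by linarith
  have "(\<lambda>V :: real^'T^'k. \<chi> u. (V $ k $ u)\<^sup>2) \<in> borel_measurable borel"
    by (intro borel_measurable_continuous_onI continuous_on_vec_lambda continuous_intros
        continuous_on_component)
  from measurable_comp[OF sel_meas this] have f_meas: "f \<in> borel_measurable borel"
    by (simp add: f_def o_def)
  have f_equiv: "f (\<chi> i t. Z $ i $ \<sigma> t) = (\<chi> t. f Z $ \<sigma> t)" if "\<sigma> permutes UNIV" for \<sigma> Z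
    using sel_equiv[OF that] by (simp add: f_def)
  have "prob {\<omega> \<in> space M. s \<in> heavy_coords (T powr \<beta> + 1) (f (Y \<omega>))} \<le> (T powr \<beta> + 1) / T"
    using prob_heavy_coord_le[OF Y_meas exch f_meas f_equiv _ c_pos, of s] by (simp add: f_def T_def)
  moreover have "s \<in> heavy_coords (T powr \<beta> + 1) (f Z) \<longleftrightarrow>
      ereal (1 / T powr \<beta>) \<le> ratio ((snd (snd (sel Z)) $ k $ s)\<^sup>2)
        (\<Sum>t\<in>UNIV - {s}. (snd (snd (sel Z)) $ k $ t)\<^sup>2)" for Z
    using mem_heavy_coords_iff_ratio[of "f Z" "T powr \<beta>" s] \<open>0 < T\<close> by (simp add: f_def)
  ultimately show ?thesis
    unfolding T_def by simp
qed

end
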